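(* Under the setting of the context, assume that all zeros of $T$ lie in $\mathbb{C}\setminus(\Delta_1\cup\Delta_m)$, that $f$ has exactly $D$ poles in $\mathbb{C}\setminus\Delta_m$, and that $n>N\ge D$. Then for each $j=1,\ldots,m-1$ and $z\in\mathbb{C}\setminus\Delta_{j+1}$, $$\frac{\mathcal{A}_{n,j}}{Q_{n,j}}(z)=\int_{\Delta_{j+1}}\frac{\mathcal{A}_{n,j+1}(x)}{z-x}\frac{d\sigma_{j+1}(x)}{Q_{n,j}(x)},$$ and for $z\in\mathbb{C}\setminus\Delta_1$, $$T(z)\mathcal{A}_{n,0}(z)=\int_{\Delta_1}\frac{\mathcal{A}_{n,1}(x)T(x)}{z-x}d\sigma_1(x).$$ Moreover, for $j=1,\ldots,m-1$, $$\int_{\Delta_{j+1}}x^\nu\mathcal{A}_{n,j+1}(x)\frac{d\sigma_{j+1}(x)}{Q_{n,j}(x)}=0,\qquad \nu=0,1,\ldots,n-D-1,$$ and $$\int_{\Delta_1}x^\nu\mathcal{A}_{n,1}(x)T(x)\,d\sigma_1(x)=0,\qquad\nu=0,1,\ldots,n-D-1.$$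
   Context: Cauchy transform: $\widehat{s}(z)=\int\frac{ds(x)}{z-x}$. For measures $\sigma_\alpha,\sigma_\beta$ on $\mathbb{R}$ with disjoint convex hulls of supports, $d\langle\sigma_\alpha,\sigma_\beta\rangle(x):=\widehat{\sigma}_\beta(x)d\sigma_\alpha(x)$. Setting: $m\ge1$; $\Delta_1,\ldots,\Delta_m$ bounded compact intervals of $\mathbb{R}$ with $\Delta_j\cap\Delta_{j+1}=\emptyset$ ($\Delta_{m+1}=\emptyset$); $\sigma_j$ a finite Borel measure of constant sign with infinite support whose convex hull is $\Delta_j$. For $1\le j\le k\le m$, $s_{j,k}=\langle\sigma_j,\langle\sigma_{j+1},\ldots,\sigma_k\rangle\rangle$, $s_{k,j}=\langle\sigma_k,\langle\sigma_{k-1},\ldots,\sigma_j\rangle\rangle$ ($s_{j,j}=\sigma_j$). $r_k=v_k/t_k$ rational with real coefficients, $t_k$ monic, $\deg v_k<\deg t_k$, $(v_k,t_k)=1$. $T=\operatorname{lcm}(t_1,\ldots,t_m)$, $D=\deg T$, $f:=\widehat{s}_{m,1}-\sum_{k=1}^{m-1}(-1)^k\widehat{s}_{m,k+1}r_k-(-1)^mr_m$. Multi-level Hermite–Padé polynomials: $a_{n,0},\ldots,a_{n,m}$, not all zero, $\deg a_{n,j}\le n-1$ ($j<m$), $\deg a_{n,m}\le n$, with, as $z\to\infty$, $\mathcal{A}_{n,0}:=a_{n,0}+\sum_{k=1}^m(-1)^ka_{n,k}(\widehat{s}_{1,k}+r_k)=O(z^{-n-1})$, $\mathcal{A}_{n,j}:=(-1)^ja_{n,j}+\sum_{k=j+1}^m(-1)^ka_{n,k}\widehat{s}_{j+1,k}=O(z^{-1})$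 ($1\le j\le m-1$); $\mathcal{A}_{n,m}:=(-1)^ma_{n,m}$. Under the stated assumptions on $T$ and $f$ it is known that there is $N\ge D$ such that for $n>N$: $\deg a_{n,m}=n$, the solution is unique up to a constant factor and normalized with $a_{n,m}$ monic; $a_{n,m}$ has exactly $n-D$ simple zeros on $\Delta_m$; for $1\le j\le m-1$, $\mathcal{A}_{n,j}$ has exactly $n-D$ zeros in $\mathbb{C}\setminus\Delta_{j+1}$, simple and in $\Delta_j$. $Q_{n,j}$ ($1\le j\le m$) is the monic polynomial of degree $n-D$ whose zeros are the zeros of $\mathcal{A}_{n,j}$ on $\Delta_j$. *)

theory Defs
  imports "HOL-Complex_Analysis.Complex_Analysis" "HOL-Library.Landau_Symbols"
          "HOL-Computational_Algebra.Polynomial_Factorial" "HOL-Computational_Algebra.Field_as_Ring"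
begin

text \<open>A signed measure of constant sign is represented as sign (ep j) times a finite
  positive Borel measure (mu j).  Integrals w.r.t. sigma_j are ep j times integrals w.r.t. mu j.\<close>

definition msupp :: "real measure \<Rightarrow> real set" where
  "msupp M = {x. \<forall>e>0. emeasure M (ball x e) > 0}"

text \<open>nik_up mu ep j d z = Cauchy transform of s_{j,j+d} = <sigma_j,...,sigma_{j+d}> at z.\<close>
primrec nik_up :: "(nat \<Rightarrow> real measure) \<Rightarrow> (nat \<Rightarrow> real) \<Rightarrow> nat \<Rightarrow> nat \<Rightarrow> complex \<Rightarrow> complex" where
  "nik_up mu ep j 0 z = of_real (ep j) * (LINT x|mu j. 1 / (z - of_real x))"
| "nik_up mu ep j (Suc d) z =
     of_real (ep j) * (LINT x|mu j. nik_up mu ep (Suc j) d (of_real x) / (z - of_real x))"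

text \<open>nik_down mu ep k d z = Cauchy transform of s_{k,k-d} = <sigma_k,sigma_{k-1},...,sigma_{k-d}> at z.\<close>
primrec nik_down :: "(nat \<Rightarrow> real measure) \<Rightarrow> (nat \<Rightarrow> real) \<Rightarrow> nat \<Rightarrow> nat \<Rightarrow> complex \<Rightarrow> complex" where
  "nik_down mu ep k 0 z = of_real (ep k) * (LINT x|mu k. 1 / (z - of_real x))"
| "nik_down mu ep k (Suc d) z =
     of_real (ep k) * (LINT x|mu k. nik_down mu ep (k - 1) d (of_real x) / (z - of_real x))"

definition hat_s :: "(nat \<Rightarrow> real measure) \<Rightarrow> (nat \<Rightarrow> real) \<Rightarrow> nat \<Rightarrow> nat \<Rightarrow> complex \<Rightarrow> complex" where
  "hat_s mu ep j k z = (if j \<le> k then nik_up mu ep j (k - j) z else nik_down mu ep j (j - k) z)"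

definition ratf :: "(nat \<Rightarrow> real poly) \<Rightarrow> (nat \<Rightarrow> real poly) \<Rightarrow> nat \<Rightarrow> complex \<Rightarrow> complex" where
  "ratf v t k z = poly (map_poly of_real (v k)) z / poly (map_poly of_real (t k)) z"

definition TT :: "(nat \<Rightarrow> real poly) \<Rightarrow> nat \<Rightarrow> real poly" where
  "TT t m = Lcm (t ` {1..m})"

definition fF :: "(nat \<Rightarrow> real measure) \<Rightarrow> (nat \<Rightarrow> real) \<Rightarrow> (nat \<Rightarrow> real poly) \<Rightarrow> (nat \<Rightarrow> real poly)
    \<Rightarrow> nat \<Rightarrow> complex \<Rightarrow> complex" where
  "fF mu ep v t m z = hat_s mu ep m 1 z
     - (\<Sum>k=1..m-1. (-1)^k * hat_s mu ep m (k+1) z * ratf v t k z)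
     - (-1)^m * ratf v t m z"

definition Acal :: "(nat \<Rightarrow> real measure) \<Rightarrow> (nat \<Rightarrow> real) \<Rightarrow> (nat \<Rightarrow> real poly) \<Rightarrow> (nat \<Rightarrow> real poly)
    \<Rightarrow> nat \<Rightarrow> (nat \<Rightarrow> complex poly) \<Rightarrow> nat \<Rightarrow> complex \<Rightarrow> complex" where
  "Acal mu ep v t m a j z =
     (if j = 0 then
        poly (a 0) z + (\<Sum>k=1..m. (-1)^k * poly (a k) z * (hat_s mu ep 1 k z + ratf v t k z))
      else
        (-1)^j * poly (a j) z + (\<Sum>k=j+1..m. (-1)^k * poly (a k) z * hat_s mu ep (j+1) k z))"

text \<open>The function T(z) A_{n,0}(z), written with T r_k = (T div t_k) v_k so that it is the
  (entire-in-the-rational-part) function meant in the paper, also at the zeros of T.\<close>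
definition TA0 :: "(nat \<Rightarrow> real measure) \<Rightarrow> (nat \<Rightarrow> real) \<Rightarrow> (nat \<Rightarrow> real poly) \<Rightarrow> (nat \<Rightarrow> real poly)
    \<Rightarrow> nat \<Rightarrow> (nat \<Rightarrow> complex poly) \<Rightarrow> complex \<Rightarrow> complex" where
  "TA0 mu ep v t m a z =
     poly (map_poly of_real (TT t m)) z *
       (poly (a 0) z + (\<Sum>k=1..m. (-1)^k * poly (a k) z * hat_s mu ep 1 k z))
     + (\<Sum>k=1..m. (-1)^k * poly (a k) z * poly (map_poly of_real ((TT t m div t k) * v k)) z)"

definition is_HP :: "(nat \<Rightarrow> real measure) \<Rightarrow> (nat \<Rightarrow> real) \<Rightarrow> (nat \<Rightarrow> real poly) \<Rightarrow> (nat \<Rightarrow> real poly)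
    \<Rightarrow> nat \<Rightarrow> nat \<Rightarrow> (nat \<Rightarrow> complex poly) \<Rightarrow> bool" where
  "is_HP mu ep v t m n a \<longleftrightarrow>
     (\<exists>j\<le>m. a j \<noteq> 0) \<and>
     (\<forall>j<m. degree (a j) \<le> n - 1) \<and> degree (a m) \<le> n \<and>
     Acal mu ep v t m a 0 \<in> O[at_infinity](\<lambda>z. 1 / z ^ (n + 1)) \<and>
     (\<forall>j\<in>{1..m-1}. Acal mu ep v t m a j \<in> O[at_infinity](\<lambda>z. 1 / z))"

definition Qpoly :: "(nat \<Rightarrow> complex \<Rightarrow> complex) \<Rightarrow> (nat \<Rightarrow> real) \<Rightarrow> (nat \<Rightarrow> real) \<Rightarrow> nat \<Rightarrow> complex poly" where
  "Qpoly A al be j = (\<Prod>x\<in>{x::real. x \<in> {al j..be j} \<and> A j (of_real x) = 0}. [:- of_real x, 1:])"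

end

theory Submission
  imports Defs
begin

(*
  For j >= 1 the form A_{n,j} is a polynomial plus a sum of polynomial multiples of Cauchy
  transforms of measures on Delta_{j+1}.  Moving a polynomial factor p(z) inside such a transform
  changes it only by a polynomial of degree < deg p, so A_{n,j} is the Cauchy transform of
  A_{n,j+1} d sigma_{j+1} plus a polynomial, and that polynomial vanishes because A_{n,j} = O(1/z).
  The same argument applied to T A_{n,0} gives the formula over Delta_1.  Moving Q_{n,j} out of
  the Cauchy transform of Q_{n,j} (A_{n,j+1} / Q_{n,j}) d sigma_{j+1} leaves a polynomial of degree
  < n - D that vanishes at the n - D zeros of A_{n,j}, hence is zero.  Finally, the Cauchy
  transforms of A_{n,j+1} / Q_{n,j} d sigma_{j+1} and of A_{n,1} T d sigma_1 are O(1/z^(n-D+1)),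
  and such decay at infinity forces the first n - D moments to vanish.
*)

section \<open>Asymptotics at infinity\<close>

lemma poly_in_bigo_inverse_eq_0:
  fixes P :: "'a::real_normed_field poly"
  assumes "poly P \<in> O[at_infinity](\<lambda>z. 1 / z)"
  shows "P = 0"
proof (rule ccontr)
  assume "P \<noteq> 0"
  have "poly (pCons 0 P) = (\<lambda>z. z * poly P z)"
    by (simp add: fun_eq_iff)
  moreover have "filterlim (poly (pCons 0 P)) at_infinity at_infinity"
    using \<open>P \<noteq> 0\<close> by (intro filterlim_poly_at_infinity) simp
  ultimately have lim: "filterlim (\<lambda>z. z * poly P z) at_infinity at_infinity"
    by simp
  have "(\<lambda>z. z * poly P z) \<in> O[at_infinity](\<lambda>z. z * (1 / z))"
    using assms by (rule landau_o.big.mult_left)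
  also have "(\<lambda>z::'a. z * (1 / z)) \<in> O[at_infinity](\<lambda>_. 1)"
    by (intro bigoI[of _ 1]) (auto simp: norm_divide)
  finally have "eventually (\<lambda>z. z * poly P z = 0) at_infinity"
    using lim by (intro landau_omega.small_big_asymmetric)
      (auto simp: bigomega_iff_bigo smallomega_1_conv_filterlim)
  moreover have "eventually (\<lambda>z. z * poly P z \<noteq> 0) at_infinity"
    using lim by (rule filterlim_at_infinity_imp_eventually_ne)
  ultimately have "eventually (\<lambda>_. False) (at_infinity :: 'a filter)"
    by eventually_elim simp
  then show False
    by (simp add: trivial_limit_at_infinity)
qed

lemma const_in_bigo_inverse_eq_0:
  fixes c :: "'a::real_normed_field"
  assumes "(\<lambda>_. c) \<in> O[at_infinity](\<lambda>z. 1 / z)"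
  shows "c = 0"
proof -
  have "poly [:c:] = (\<lambda>_. c)"
    by (simp add: fun_eq_iff)
  then show ?thesis
    using poly_in_bigo_inverse_eq_0[of "[:c:]"] assms by simp
qed

lemma poly_bigo_power:
  fixes P :: "'a::real_normed_field poly"
  shows "poly P \<in> O[at_infinity](\<lambda>z. z ^ degree P)"
proof (rule bigoI_tendsto[OF poly_divide_tendsto_aux])
  show "eventually (\<lambda>z::'a. z ^ degree P \<noteq> 0) at_infinity"
    using eventually_not_equal_at_infinity[of 0] by eventually_elim simp
qed

lemma inverse_poly_bigo_inverse_power:
  fixes P :: "'a::real_normed_field poly"
  assumes "P \<noteq> 0"
  shows "(\<lambda>z. 1 / poly P z) \<in> O[at_infinity](\<lambda>z. 1 / z ^ degree P)"
proof (rule bigoI_tendsto)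
  have "((\<lambda>z. inverse (poly P z / z ^ degree P)) \<longlongrightarrow> inverse (lead_coeff P)) at_infinity"
    using assms by (intro tendsto_inverse poly_divide_tendsto_aux) simp
  then show "((\<lambda>z. 1 / poly P z / (1 / z ^ degree P)) \<longlongrightarrow> inverse (lead_coeff P)) at_infinity"
    by (simp add: field_simps)
  show "eventually (\<lambda>z::'a. 1 / z ^ degree P \<noteq> 0) at_infinity"
    using eventually_not_equal_at_infinity[of 0] by eventually_elim simp
qed

lemma eventually_poly_nonzero_at_infinity:
  fixes P :: "'a::real_normed_field poly"
  assumes "P \<noteq> 0"
  shows "eventually (\<lambda>z. poly P z \<noteq> 0) at_infinity"
proof -
  have "eventually (\<lambda>z. poly P z / z ^ degree P \<noteq> 0) at_infinity"
    using assms by (intro tendsto_imp_eventually_ne[OF poly_divide_tendsto_aux]) simp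
  then show ?thesis
    by eventually_elim auto
qed

lemma eventually_not_in_bounded_at_infinity:
  assumes "bounded S"
  shows "eventually (\<lambda>z. z \<notin> S) at_infinity"
proof -
  obtain B where "\<forall>x\<in>S. norm x \<le> B"
    using assms by (auto simp: bounded_iff)
  then show ?thesis
    unfolding eventually_at_infinity by (intro exI[of _ "B + 1"]) force
qed

lemma inverse_power_bigo_inverse_power:
  fixes k l :: nat
  assumes "k \<le> l"
  shows "(\<lambda>z::'a::real_normed_field. 1 / z ^ l) \<in> O[at_infinity](\<lambda>z. 1 / z ^ k)"
proof (rule bigoI[of _ 1], rule eventually_at_infinityI[of 1])
  fix z :: 'a assume "1 \<le> norm z"
  then have "norm z ^ k \<le> norm z ^ l"
    using assms by (intro power_increasing)
  moreover have "0 < norm z ^ k"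
    using \<open>1 \<le> norm z\<close> by (intro zero_less_power) linarith
  ultimately show "norm (1 / z ^ l) \<le> 1 * norm (1 / z ^ k)"
    by (simp add: norm_divide norm_power frac_le)
qed

lemma z_times_bigo_inverse_power:
  fixes f :: "'a::real_normed_field \<Rightarrow> 'a"
  assumes "f \<in> O[at_infinity](\<lambda>z. 1 / z ^ Suc k)"
  shows "(\<lambda>z. z * f z) \<in> O[at_infinity](\<lambda>z. 1 / z ^ k)"
proof -
  have ev: "eventually (\<lambda>z::'a. z * (1 / z ^ Suc k) = 1 / z ^ k) at_infinity"
    using eventually_not_equal_at_infinity[of 0] by eventually_elim simp
  have "(\<lambda>z. z * f z) \<in> O[at_infinity](\<lambda>z. z * (1 / z ^ Suc k))"
    using assms by (rule landau_o.big.mult_left)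
  also have "(\<lambda>z. z * (1 / z ^ Suc k)) \<in> O[at_infinity](\<lambda>z::'a. 1 / z ^ k)"
    using landau_o.big.in_cong[OF ev, of "\<lambda>z. 1 / z ^ k"] by simp
  finally show ?thesis .
qed

section \<open>Bounded Borel functions\<close>

definition bounded_borel_on :: "real set \<Rightarrow> (real \<Rightarrow> complex) \<Rightarrow> bool" where
  "bounded_borel_on S w \<longleftrightarrow> w \<in> borel_measurable borel \<and> (\<exists>B. \<forall>x\<in>S. norm (w x) \<le> B)"

lemma bounded_borel_onE:
  assumes "bounded_borel_on S w"
  obtains B where "0 \<le> B" "\<And>x. x \<in> S \<Longrightarrow> norm (w x) \<le> B" "w \<in> borel_measurable borel"
  using assms unfolding bounded_borel_on_def by (metis linear order_trans norm_ge_zero)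

lemma bounded_borel_onI_continuous:
  assumes "w \<in> borel_measurable borel" "continuous_on S w" "compact S"
  shows "bounded_borel_on S w"
proof -
  have "bounded (w ` S)"
    using assms by (intro compact_imp_bounded compact_continuous_image)
  then show ?thesis
    using assms(1) unfolding bounded_borel_on_def bounded_iff by auto
qed

lemma bounded_borel_on_continuous:
  "continuous_on UNIV w \<Longrightarrow> compact S \<Longrightarrow> bounded_borel_on S w"
  using continuous_on_subset[of UNIV w S]
  by (intro bounded_borel_onI_continuous borel_measurable_continuous_onI) auto

lemma bounded_borel_on_const: "compact S \<Longrightarrow> bounded_borel_on S (\<lambda>_. c)"
  by (intro bounded_borel_on_continuous continuous_intros)

lemma bounded_borel_on_poly: "compact S \<Longrightarrow> bounded_borel_on S (\<lambda>x. poly p (of_real x))"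
  by (intro bounded_borel_on_continuous continuous_intros)

lemma bounded_borel_on_of_real: "compact S \<Longrightarrow> bounded_borel_on S (\<lambda>x. of_real x)"
  by (intro bounded_borel_on_continuous continuous_intros)

lemma bounded_borel_on_power: "compact S \<Longrightarrow> bounded_borel_on S (\<lambda>x. of_real x ^ k)"
  by (intro bounded_borel_on_continuous continuous_intros)

lemma bounded_borel_on_inverse_poly:
  assumes "compact S" "\<And>x. x \<in> S \<Longrightarrow> poly p (of_real x) \<noteq> 0"
  shows "bounded_borel_on S (\<lambda>x. 1 / poly p (of_real x))"
  using assms
  by (intro bounded_borel_onI_continuous borel_measurable_divide borel_measurable_continuous_onI)
     (auto intro!: continuous_intros)

lemma bounded_borel_on_add:
  assumes "bounded_borel_on S f" "bounded_borel_on S g"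
  shows "bounded_borel_on S (\<lambda>x. f x + g x)"
proof -
  obtain B C where "\<forall>x\<in>S. norm (f x) \<le> B" "\<forall>x\<in>S. norm (g x) \<le> C"
    using assms unfolding bounded_borel_on_def by blast
  then have "\<forall>x\<in>S. norm (f x + g x) \<le> B + C"
    by (metis add_mono norm_triangle_le)
  then show ?thesis
    using assms unfolding bounded_borel_on_def by auto
qed

lemma bounded_borel_on_mult:
  assumes "bounded_borel_on S f" "bounded_borel_on S g"
  shows "bounded_borel_on S (\<lambda>x. f x * g x)"
proof -
  obtain B C where B: "\<forall>x\<in>S. norm (f x) \<le> B" and C: "\<forall>x\<in>S. norm (g x) \<le> C"
    using assms unfolding bounded_borel_on_def by blast
  have "norm (f x * g x) \<le> B * C" if "x \<in> S" for x
    unfolding norm_mult using B C that by (intro mult_mono' norm_ge_zero) auto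
  then show ?thesis
    using assms unfolding bounded_borel_on_def by auto
qed

lemma bounded_borel_on_sum:
  "compact S \<Longrightarrow> (\<And>i. i \<in> I \<Longrightarrow> bounded_borel_on S (f i)) \<Longrightarrow>
    bounded_borel_on S (\<lambda>x. \<Sum>i\<in>I. f i x)"
  by (induction I rule: infinite_finite_induct) (auto intro: bounded_borel_on_add bounded_borel_on_const)

section \<open>Cauchy transforms of measures concentrated on an interval\<close>

lemma AE_in_convex_hull_msupp:
  fixes M :: "real measure"
  assumes sets: "sets M = sets borel"
  shows "AE x in M. x \<in> convex hull (msupp M)"
proof -
  let ?N = "{ball x e | x e. e > 0 \<and> emeasure M (ball x e) = 0}"
  obtain N' where N': "N' \<subseteq> ?N" "countable N'" "\<Union>N' = \<Union>?N"
    using Lindelof[of ?N] by auto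
  have cover: "\<exists>B\<in>N'. x \<in> B" if "x \<notin> convex hull (msupp M)" for x
  proof -
    have "x \<notin> msupp M"
      using that hull_subset[of "msupp M" convex] by auto
    then obtain e where "e > 0" "emeasure M (ball x e) = 0"
      unfolding msupp_def by (auto simp: not_gr_zero)
    then have "x \<in> \<Union>?N"
      by force
    then show ?thesis
      unfolding N'(3)[symmetric] by blast
  qed
  have "AE x in M. \<forall>B\<in>N'. x \<notin> B"
  proof (subst AE_ball_countable[OF N'(2)], intro ballI)
    fix B assume "B \<in> N'"
    then have "B \<in> null_sets M"
      using N'(1) sets by (auto intro!: null_setsI)
    then show "AE x in M. x \<notin> B"
      by (rule AE_not_in)
  qed
  then show ?thesis
    by eventually_elim (use cover in blast)
qed

definition cauchy_transform :: "real measure \<Rightarrow> (real \<Rightarrow> complex) \<Rightarrow> complex \<Rightarrow> complex" where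
  "cauchy_transform M w z = (LINT x|M. w x / (z - of_real x))"

lemma cauchy_transform_cmult: "cauchy_transform M (\<lambda>x. c * w x) z = c * cauchy_transform M w z"
  unfolding cauchy_transform_def by (simp flip: integral_mult_right_zero)

locale interval_measure = finite_measure M for M :: "real measure" +
  fixes a b :: real
  assumes sets_eq_borel: "sets M = sets borel"
    and AE_in_interval: "AE x in M. x \<in> {a..b}"
begin

lemma measurable_from_borel: "f \<in> borel_measurable borel \<Longrightarrow> f \<in> borel_measurable M"
  by (simp add: measurable_cong_sets[OF sets_eq_borel refl])

lemma norm_integral_le_bound_on_interval:
  fixes f :: "real \<Rightarrow> complex"
  assumes "f \<in> borel_measurable M" "\<And>x. x \<in> {a..b} \<Longrightarrow> norm (f x) \<le> B" "0 \<le> B"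
  shows "norm (LINT x|M. f x) \<le> B * measure M (space M)"
proof -
  have "AE x in M. norm (f x) \<le> B"
    using AE_in_interval by eventually_elim (rule assms(2))
  then have "(LINT x|M. norm (f x)) \<le> B * measure M (space M)"
    using assms(3) integral_mono_AE'[of M "\<lambda>_. B" "\<lambda>x. norm (f x)"] by (simp add: mult.commute)
  then show ?thesis
    using integral_norm_bound[of M f] by linarith
qed

lemma integrable_bounded_borel_on:
  assumes "bounded_borel_on {a..b} w"
  shows "integrable M w"
proof -
  obtain B where B: "\<And>x. x \<in> {a..b} \<Longrightarrow> norm (w x) \<le> B" and "w \<in> borel_measurable borel"
    using assms by (metis bounded_borel_onE)
  moreover have "AE x in M. norm (w x) \<le> B"
    using AE_in_interval by eventually_elim (rule B)
  ultimately show ?thesis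
    by (intro integrable_const_bound measurable_from_borel)
qed

lemma integral_cong_on_interval:
  fixes f g :: "real \<Rightarrow> complex"
  assumes "integrable M f" "integrable M g" "\<And>x. x \<in> {a..b} \<Longrightarrow> f x = g x"
  shows "(LINT x|M. f x) = (LINT x|M. g x)"
proof (rule integral_cong_AE)
  show "f \<in> borel_measurable M" "g \<in> borel_measurable M"
    using assms(1,2) by auto
  show "AE x in M. f x = g x"
    using AE_in_interval by eventually_elim (rule assms(3))
qed

lemma bounded_borel_on_cauchy_kernel:
  assumes w: "bounded_borel_on {a..b} w" and z: "z \<notin> of_real ` {a..b}"
  shows "bounded_borel_on {a..b} (\<lambda>x. w x / (z - of_real x))"
proof -
  have "closed (of_real ` {a..b} :: complex set)"
    by (intro compact_imp_closed compact_continuous_image continuous_intros) auto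
  then obtain \<delta> where "\<delta> > 0" and \<delta>: "\<forall>x\<in>{a..b}. \<delta> \<le> norm (z - of_real x)"
    using separate_point_closed[OF _ z] by (auto simp: dist_norm)
  then have "bounded_borel_on {a..b} (\<lambda>x. 1 / (z - of_real x))"
  proof (unfold bounded_borel_on_def, intro conjI exI ballI)
    show "(\<lambda>x. 1 / (z - of_real x)) \<in> borel_measurable borel"
      by (intro borel_measurable_divide borel_measurable_continuous_onI continuous_intros)
    show "norm (1 / (z - of_real x)) \<le> 1 / \<delta>" if "x \<in> {a..b}" for x
      using \<delta> \<open>\<delta> > 0\<close> that by (simp add: norm_divide divide_simps)
  qed
  then have "bounded_borel_on {a..b} (\<lambda>x. w x * (1 / (z - of_real x)))"
    by (rule bounded_borel_on_mult[OF w])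
  then show ?thesis
    by simp
qed

lemma integrable_cauchy_kernel:
  "bounded_borel_on {a..b} w \<Longrightarrow> z \<notin> of_real ` {a..b} \<Longrightarrow>
    integrable M (\<lambda>x. w x / (z - of_real x))"
  by (intro integrable_bounded_borel_on bounded_borel_on_cauchy_kernel)

lemma cauchy_transform_cong:
  assumes "bounded_borel_on {a..b} f" "bounded_borel_on {a..b} g"
    and "\<And>x. x \<in> {a..b} \<Longrightarrow> f x = g x" "z \<notin> of_real ` {a..b}"
  shows "cauchy_transform M f z = cauchy_transform M g z"
  unfolding cauchy_transform_def using assms
  by (intro integral_cong_on_interval integrable_cauchy_kernel) auto

lemma cauchy_transform_add:
  assumes "bounded_borel_on {a..b} f" "bounded_borel_on {a..b} g" "z \<notin> of_real ` {a..b}"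
  shows "cauchy_transform M (\<lambda>x. f x + g x) z = cauchy_transform M f z + cauchy_transform M g z"
  unfolding cauchy_transform_def add_divide_distrib
  using assms by (intro Bochner_Integration.integral_add integrable_cauchy_kernel)

lemma cauchy_transform_sum:
  assumes "\<And>k. k \<in> I \<Longrightarrow> bounded_borel_on {a..b} (f k)" "z \<notin> of_real ` {a..b}"
  shows "cauchy_transform M (\<lambda>x. \<Sum>k\<in>I. f k x) z = (\<Sum>k\<in>I. cauchy_transform M (f k) z)"
  unfolding cauchy_transform_def sum_divide_distrib
  using assms by (intro Bochner_Integration.integral_sum integrable_cauchy_kernel)

lemma z_times_cauchy_transform:
  assumes w: "bounded_borel_on {a..b} w" and z: "z \<notin> of_real ` {a..b}"
  shows "z * cauchy_transform M w z = (LINT x|M. w x) + cauchy_transform M (\<lambda>x. of_real x * w x) z"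
proof -
  have xw: "bounded_borel_on {a..b} (\<lambda>x. of_real x * w x)"
    by (intro bounded_borel_on_mult bounded_borel_on_of_real w) simp
  have "z * cauchy_transform M w z = (LINT x|M. w x + of_real x * w x / (z - of_real x))"
    unfolding cauchy_transform_def integral_mult_right_zero[symmetric]
  proof (rule integral_cong_on_interval)
    fix x assume "x \<in> {a..b}"
    then have "z - of_real x \<noteq> 0"
      using z by auto
    then show "z * (w x / (z - of_real x)) = w x + of_real x * w x / (z - of_real x)"
      by (simp add: field_simps)
  next
    show "integrable M (\<lambda>x. z * (w x / (z - of_real x)))"
      using w z by (intro integrable_mult_right integrable_cauchy_kernel)
    show "integrable M (\<lambda>x. w x + of_real x * w x / (z - of_real x))"
      using integrable_bounded_borel_on[OF w] integrable_cauchy_kernel[OF xw z] by simp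
  qed
  also have "\<dots> = (LINT x|M. w x) + cauchy_transform M (\<lambda>x. of_real x * w x) z"
    unfolding cauchy_transform_def using w z xw
    by (intro Bochner_Integration.integral_add integrable_bounded_borel_on integrable_cauchy_kernel)
  finally show ?thesis .
qed

lemma eventually_not_in_interval_at_infinity:
  "eventually (\<lambda>z::complex. z \<notin> of_real ` {a..b}) at_infinity"
proof (rule eventually_not_in_bounded_at_infinity)
  show "bounded (of_real ` {a..b} :: complex set)"
    unfolding bounded_iff by (intro exI[of _ "\<bar>a\<bar> + \<bar>b\<bar>"]) auto
qed

lemma cauchy_transform_bigo:
  assumes "bounded_borel_on {a..b} w"
  shows "cauchy_transform M w \<in> O[at_infinity](\<lambda>z. 1 / z)"
proof -
  obtain B where B: "\<And>x. x \<in> {a..b} \<Longrightarrow> norm (w x) \<le> B" "0 \<le> B"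
    and meas: "w \<in> borel_measurable borel"
    using assms by (metis bounded_borel_onE)
  define C where "C = 2 * B * measure M (space M)"
  have "norm (cauchy_transform M w z) \<le> C * norm (1 / z)"
    if z: "2 * (\<bar>a\<bar> + \<bar>b\<bar>) + 1 \<le> norm z" for z
  proof -
    have "norm (w x / (z - of_real x)) \<le> 2 * B / norm z" if x: "x \<in> {a..b}" for x
    proof -
      have "norm z / 2 \<le> norm z - \<bar>x\<bar>"
        using x z by auto
      also have "\<dots> \<le> norm (z - of_real x)"
        using norm_triangle_ineq2[of z "of_real x"] by simp
      finally have "norm (w x) / norm (z - of_real x) \<le> B / (norm z / 2)"
        using B x z by (intro frac_le) auto
      then show ?thesis
        by (simp add: norm_divide mult.commute)
    qed
    then have "norm (cauchy_transform M w z) \<le> 2 * B / norm z * measure M (space M)"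
      unfolding cauchy_transform_def using B(2) meas
      by (intro norm_integral_le_bound_on_interval measurable_from_borel borel_measurable_divide)
         (auto intro: borel_measurable_continuous_onI continuous_intros)
    then show ?thesis
      by (simp add: C_def norm_divide)
  qed
  then show ?thesis
    by (intro bigoI[of _ C] eventually_at_infinityI)
qed

lemma borel_measurable_cauchy_transform:
  assumes "w \<in> borel_measurable borel"
  shows "(\<lambda>x. cauchy_transform M w (of_real x)) \<in> borel_measurable borel"
proof -
  have "sets (borel \<Otimes>\<^sub>M M) = sets (borel :: (real \<times> real) measure)"
    using sets_pair_measure_cong[OF refl sets_eq_borel] by (metis borel_prod)
  then have "borel_measurable (borel \<Otimes>\<^sub>M M) = borel_measurable (borel :: (real \<times> real) measure)"
    by (rule measurable_cong_sets) simp
  moreover have "(\<lambda>p::real \<times> real. w (snd p)) \<in> borel_measurable borel"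
    using borel_measurable_continuous_onI[OF continuous_on_snd[OF continuous_on_id]] assms
    by (rule measurable_compose)
  moreover have "(\<lambda>p::real \<times> real. of_real (fst p) - of_real (snd p) :: complex)
      \<in> borel_measurable borel"
    by (intro borel_measurable_continuous_onI continuous_intros)
  ultimately have "(\<lambda>(x, y). w y / (of_real x - of_real y)) \<in> borel_measurable (borel \<Otimes>\<^sub>M M)"
    unfolding case_prod_beta by (metis borel_measurable_divide)
  then show ?thesis
    unfolding cauchy_transform_def by (rule borel_measurable_lebesgue_integral)
qed

lemma bounded_borel_on_cauchy_transform:
  assumes w: "bounded_borel_on {a..b} w" and S: "compact S" "S \<inter> {a..b} = {}"
  shows "bounded_borel_on S (\<lambda>x. cauchy_transform M w (of_real x))"
proof -
  obtain B where B: "0 \<le> B" "\<And>y. y \<in> {a..b} \<Longrightarrow> norm (w y) \<le> B"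
    and meas: "w \<in> borel_measurable borel"
    using w by (metis bounded_borel_onE)
  obtain \<delta> where "\<delta> > 0" and \<delta>: "\<forall>x\<in>S. \<forall>y\<in>{a..b}. \<delta> \<le> dist x y"
    using separate_compact_closed[OF S(1) closed_atLeastAtMost S(2)] by blast
  have "norm (cauchy_transform M w (of_real x)) \<le> B / \<delta> * measure M (space M)" if x: "x \<in> S" for x
    unfolding cauchy_transform_def
  proof (rule norm_integral_le_bound_on_interval)
    show "(\<lambda>y. w y / (of_real x - of_real y)) \<in> borel_measurable M"
      by (intro measurable_from_borel borel_measurable_divide[OF meas])
         (intro borel_measurable_continuous_onI continuous_intros)
    fix y assume y: "y \<in> {a..b}"
    have "\<delta> \<le> norm (of_real x - of_real y :: complex)"
      using \<delta> x y by (simp add: dist_real_def flip: of_real_diff)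
    then show "norm (w y / (of_real x - of_real y)) \<le> B / \<delta>"
      using B y \<open>\<delta> > 0\<close> by (simp add: norm_divide frac_le)
  qed (use B \<open>\<delta> > 0\<close> in simp)
  then show ?thesis
    unfolding bounded_borel_on_def using borel_measurable_cauchy_transform[OF meas] by blast
qed

lemma pCons_times_cauchy_transform:
  assumes w: "bounded_borel_on {a..b} w" and z: "z \<notin> of_real ` {a..b}"
    and H: "poly q z * cauchy_transform M w z =
      cauchy_transform M (\<lambda>x. poly q (of_real x) * w x) z + poly H z"
  shows "poly (pCons c q) z * cauchy_transform M w z =
    cauchy_transform M (\<lambda>x. poly (pCons c q) (of_real x) * w x) z +
    poly (pCons (LINT x|M. poly q (of_real x) * w x) H) z"
proof -
  define qw where "qw = (\<lambda>x. poly q (of_real x) * w x)"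
  have qw: "bounded_borel_on {a..b} qw"
    unfolding qw_def by (intro bounded_borel_on_mult bounded_borel_on_poly w) simp
  have xqw: "bounded_borel_on {a..b} (\<lambda>x. of_real x * qw x)"
    by (intro bounded_borel_on_mult bounded_borel_on_of_real qw) simp
  have pw: "(\<lambda>x. poly (pCons c q) (of_real x) * w x) = (\<lambda>x. c * w x + of_real x * qw x)"
    by (simp add: fun_eq_iff qw_def algebra_simps)
  have "poly (pCons c q) z * cauchy_transform M w z =
      c * cauchy_transform M w z + z * (poly q z * cauchy_transform M w z)"
    by (simp add: distrib_right mult.assoc)
  also have "\<dots> = c * cauchy_transform M w z + z * cauchy_transform M qw z + z * poly H z"
    using H by (simp add: qw_def distrib_left)
  also have "\<dots> = c * cauchy_transform M w z + cauchy_transform M (\<lambda>x. of_real x * qw x) z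
                  + poly (pCons (LINT x|M. qw x) H) z"
    using z_times_cauchy_transform[OF qw z] by simp
  also have "c * cauchy_transform M w z + cauchy_transform M (\<lambda>x. of_real x * qw x) z
           = cauchy_transform M (\<lambda>x. poly (pCons c q) (of_real x) * w x) z"
    unfolding pw using w z xqw
    by (simp add: cauchy_transform_add cauchy_transform_cmult bounded_borel_on_mult bounded_borel_on_const)
  finally show ?thesis
    by (simp add: qw_def)
qed

lemma poly_times_cauchy_transform:
  assumes w: "bounded_borel_on {a..b} w"
  shows "\<exists>H. (H = 0 \<or> degree H < degree p) \<and> (\<forall>z. z \<notin> of_real ` {a..b} \<longrightarrow>
    poly p z * cauchy_transform M w z = cauchy_transform M (\<lambda>x. poly p (of_real x) * w x) z + poly H z)"
proof (induction p)
  case 0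
  show ?case
    by (intro exI[of _ 0]) (simp add: cauchy_transform_def)
next
  case (pCons c q)
  then obtain H where deg: "H = 0 \<or> degree H < degree q" and H: "\<forall>z. z \<notin> of_real ` {a..b} \<longrightarrow>
      poly q z * cauchy_transform M w z = cauchy_transform M (\<lambda>x. poly q (of_real x) * w x) z + poly H z"
    by blast
  define m where "m = (LINT x|M. poly q (of_real x) * w x)"
  have "pCons m H = 0 \<or> degree (pCons m H) < degree (pCons c q)"
  proof (cases "q = 0")
    case True
    then show ?thesis
      using deg by (simp add: m_def)
  next
    case False
    then show ?thesis
      using deg degree_pCons_le[of m H] by auto
  qed
  then show ?case
    using pCons_times_cauchy_transform[OF w] H unfolding m_def by blast
qed

lemma integral_eq_0_if_cauchy_transform_bigo:
  assumes w: "bounded_borel_on {a..b} w"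
    and decay: "cauchy_transform M w \<in> O[at_infinity](\<lambda>z. 1 / z ^ 2)"
  shows "(LINT x|M. w x) = 0"
proof -
  have xw: "bounded_borel_on {a..b} (\<lambda>x. of_real x * w x)"
    by (intro bounded_borel_on_mult bounded_borel_on_of_real w) simp
  have "(\<lambda>z. z * cauchy_transform M w z - cauchy_transform M (\<lambda>x. of_real x * w x) z)
      \<in> O[at_infinity](\<lambda>z. 1 / z)"
    using z_times_bigo_inverse_power[of _ 1] decay cauchy_transform_bigo[OF xw]
    by (intro sum_in_bigo(2)) (simp_all add: numeral_2_eq_2)
  moreover have "eventually (\<lambda>z.
      z * cauchy_transform M w z - cauchy_transform M (\<lambda>x. of_real x * w x) z = (LINT x|M. w x)) at_infinity"
    using eventually_not_in_interval_at_infinity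
    by eventually_elim (simp add: z_times_cauchy_transform[OF w])
  ultimately show ?thesis
    by (intro const_in_bigo_inverse_eq_0) (simp add: landau_o.big.in_cong)
qed

lemma cauchy_transform_of_real_times_bigo:
  assumes w: "bounded_borel_on {a..b} w"
    and decay: "cauchy_transform M w \<in> O[at_infinity](\<lambda>z. 1 / z ^ Suc k)"
    and "(LINT x|M. w x) = 0"
  shows "cauchy_transform M (\<lambda>x. of_real x * w x) \<in> O[at_infinity](\<lambda>z. 1 / z ^ k)"
proof -
  have "eventually (\<lambda>z. z * cauchy_transform M w z = cauchy_transform M (\<lambda>x. of_real x * w x) z)
      at_infinity"
    using eventually_not_in_interval_at_infinity
    by eventually_elim (simp add: z_times_cauchy_transform[OF w] \<open>(LINT x|M. w x) = 0\<close>)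
  then show ?thesis
    using z_times_bigo_inverse_power[OF decay] by (simp add: landau_o.big.in_cong)
qed

lemma moments_eq_0_if_cauchy_transform_bigo:
  assumes w: "bounded_borel_on {a..b} w"
    and decay: "cauchy_transform M w \<in> O[at_infinity](\<lambda>z. 1 / z ^ Suc K)"
    and "\<nu> < K"
  shows "(LINT x|M. of_real x ^ \<nu> * w x) = 0"
proof -
  have xw: "bounded_borel_on {a..b} (\<lambda>x. of_real x ^ \<nu> * w x)" for \<nu>
    by (intro bounded_borel_on_mult bounded_borel_on_power w) simp
  have decay_2: "cauchy_transform M (\<lambda>x. of_real x ^ \<nu> * w x) \<in> O[at_infinity](\<lambda>z. 1 / z ^ 2)"
    if "cauchy_transform M (\<lambda>x. of_real x ^ \<nu> * w x) \<in> O[at_infinity](\<lambda>z. 1 / z ^ Suc (K - \<nu>))"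
      and "\<nu> < K" for \<nu>
    using landau_o.big_trans[OF that(1) inverse_power_bigo_inverse_power] that(2) by simp
  have "cauchy_transform M (\<lambda>x. of_real x ^ \<nu> * w x) \<in> O[at_infinity](\<lambda>z. 1 / z ^ Suc (K - \<nu>))"
    if "\<nu> \<le> K" for \<nu>
    using that
  proof (induction \<nu>)
    case 0
    then show ?case
      using decay by simp
  next
    case (Suc \<nu>)
    then have "(LINT x|M. of_real x ^ \<nu> * w x) = 0"
      using decay_2 by (intro integral_eq_0_if_cauchy_transform_bigo[OF xw]) simp
    then have "cauchy_transform M (\<lambda>x. of_real x * (of_real x ^ \<nu> * w x))
        \<in> O[at_infinity](\<lambda>z. 1 / z ^ (K - \<nu>))"
      using Suc by (intro cauchy_transform_of_real_times_bigo[OF xw]) simp_all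
    then show ?case
      using Suc.prems by (simp add: Suc_diff_Suc mult.assoc)
  qed
  then show ?thesis
    using decay_2 \<open>\<nu> < K\<close> by (intro integral_eq_0_if_cauchy_transform_bigo[OF xw]) simp
qed

lemma cauchy_transform_representation:
  assumes S: "\<And>k. k \<in> I \<Longrightarrow> bounded_borel_on {a..b} (S k)"
    and F: "\<And>z. z \<notin> of_real ` {a..b} \<Longrightarrow>
              F z = poly P z + (\<Sum>k\<in>I. poly (p k) z * cauchy_transform M (S k) z)"
    and F_bigo: "F \<in> O[at_infinity](\<lambda>z. 1 / z)"
    and z: "z \<notin> of_real ` {a..b}"
  shows "F z = cauchy_transform M (\<lambda>x. \<Sum>k\<in>I. poly (p k) (of_real x) * S k x) z"
proof -
  define G where "G = cauchy_transform M (\<lambda>x. \<Sum>k\<in>I. poly (p k) (of_real x) * S k x)"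
  have pS: "bounded_borel_on {a..b} (\<lambda>x. poly (p k) (of_real x) * S k x)" if "k \<in> I" for k
    using that by (intro bounded_borel_on_mult bounded_borel_on_poly S) simp_all
  have "\<forall>k\<in>I. \<exists>H. \<forall>z. z \<notin> of_real ` {a..b} \<longrightarrow>
      poly (p k) z * cauchy_transform M (S k) z
        = cauchy_transform M (\<lambda>x. poly (p k) (of_real x) * S k x) z + poly H z"
    using poly_times_cauchy_transform[OF S] by blast
  then obtain H where H: "\<forall>k\<in>I. \<forall>z. z \<notin> of_real ` {a..b} \<longrightarrow>
      poly (p k) z * cauchy_transform M (S k) z
        = cauchy_transform M (\<lambda>x. poly (p k) (of_real x) * S k x) z + poly (H k) z"
    by (rule bchoice[elim_format]) blast
  have FG: "F z = G z + poly (P + (\<Sum>k\<in>I. H k)) z" if z: "z \<notin> of_real ` {a..b}" for z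
  proof -
    have "F z = poly P z +
        (\<Sum>k\<in>I. cauchy_transform M (\<lambda>x. poly (p k) (of_real x) * S k x) z + poly (H k) z)"
      using F[OF z] H z by simp
    also have "\<dots> = G z + poly (P + (\<Sum>k\<in>I. H k)) z"
      using cauchy_transform_sum[of I "\<lambda>k x. poly (p k) (of_real x) * S k x", OF pS z]
      by (simp add: G_def sum.distrib poly_sum)
    finally show ?thesis .
  qed
  have "(\<lambda>z. F z - G z) \<in> O[at_infinity](\<lambda>z. 1 / z)"
    unfolding G_def
    by (intro sum_in_bigo(2) F_bigo cauchy_transform_bigo bounded_borel_on_sum pS) simp
  moreover have "eventually (\<lambda>z. F z - G z = poly (P + (\<Sum>k\<in>I. H k)) z) at_infinity"
    using eventually_not_in_interval_at_infinity by eventually_elim (simp add: FG)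
  ultimately have "poly (P + (\<Sum>k\<in>I. H k)) \<in> O[at_infinity](\<lambda>z. 1 / z)"
    by (metis landau_o.big.in_cong)
  then have "P + (\<Sum>k\<in>I. H k) = 0"
    by (rule poly_in_bigo_inverse_eq_0)
  then show ?thesis
    using FG[OF z] by (simp add: G_def)
qed

lemma cauchy_transform_poly_times_eq:
  assumes w: "bounded_borel_on {a..b} w"
    and Z: "finite Z" "degree Q \<le> card Z" "Z \<inter> of_real ` {a..b} = {}"
    and zeros: "\<And>\<zeta>. \<zeta> \<in> Z \<Longrightarrow> poly Q \<zeta> = 0"
    and vanish: "\<And>\<zeta>. \<zeta> \<in> Z \<Longrightarrow>
      cauchy_transform M (\<lambda>x. poly Q (of_real x) * w x) \<zeta> = 0"
    and z: "z \<notin> of_real ` {a..b}"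
  shows "cauchy_transform M (\<lambda>x. poly Q (of_real x) * w x) z = poly Q z * cauchy_transform M w z"
proof -
  obtain H where deg: "H = 0 \<or> degree H < degree Q" and H: "\<forall>z. z \<notin> of_real ` {a..b} \<longrightarrow>
      poly Q z * cauchy_transform M w z = cauchy_transform M (\<lambda>x. poly Q (of_real x) * w x) z + poly H z"
    using poly_times_cauchy_transform[OF w] by blast
  have "H = 0"
  proof (rule ccontr)
    assume "H \<noteq> 0"
    have "Z \<subseteq> {\<zeta>. poly H \<zeta> = 0}"
    proof
      fix \<zeta> assume "\<zeta> \<in> Z"
      then have "\<zeta> \<notin> of_real ` {a..b}"
        using Z(3) by blast
      then show "\<zeta> \<in> {\<zeta>. poly H \<zeta> = 0}"
        using H[rule_format, of \<zeta>] zeros[OF \<open>\<zeta> \<in> Z\<close>] vanish[OF \<open>\<zeta> \<in> Z\<close>]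
        by simp
    qed
    then have "card Z \<le> card {\<zeta>. poly H \<zeta> = 0}"
      using poly_roots_finite[OF \<open>H \<noteq> 0\<close>] by (rule card_mono[rotated])
    also have "\<dots> \<le> degree H"
      using \<open>H \<noteq> 0\<close> by (rule card_poly_roots_bound)
    finally show False
      using deg Z(2) \<open>H \<noteq> 0\<close> by linarith
  qed
  then show ?thesis
    using H z by simp
qed

end

section \<open>Nikishin systems and their Hermite-Pade forms\<close>

(* The density of s_{i,k} with respect to sigma_i: the Cauchy transform of s_{i+1,k} if i < k. *)
definition nik_density ::
    "(nat \<Rightarrow> real measure) \<Rightarrow> (nat \<Rightarrow> real) \<Rightarrow> nat \<Rightarrow> nat \<Rightarrow> real \<Rightarrow> complex" where "nik_density mu ep i k x = (if k = i then 1 else hat_s mu ep (i + 1) k (of_real x))"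

lemma hat_s_eq_cauchy_transform:
  assumes "i \<le> k"
  shows "hat_s mu ep i k z = of_real (ep i) * cauchy_transform (mu i) (nik_density mu ep i k) z"
proof (cases "k = i")
  case False
  then have "k - i = Suc (k - (i + 1))"
    using assms by simp
  then show ?thesis
    using assms False by (simp add: hat_s_def nik_density_def cauchy_transform_def)
qed (simp add: hat_s_def nik_density_def cauchy_transform_def)

lemma Acal_of_real_eq_sum_nik_density:
  assumes "1 \<le> j" "j \<le> m"
  shows "Acal mu ep v t m a j (of_real x) =
    (\<Sum>k=j..m. (-1)^k * poly (a k) (of_real x) * nik_density mu ep j k x)"
proof -
  have "(\<Sum>k=j..m. (-1)^k * poly (a k) (of_real x) * nik_density mu ep j k x) =
      (-1)^j * poly (a j) (of_real x) +
      (\<Sum>k=j+1..m. (-1)^k * poly (a k) (of_real x) * nik_density mu ep j k x)"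
    using assms(2) by (simp add: sum.atLeast_Suc_atMost nik_density_def)
  also have "(\<Sum>k=j+1..m. (-1)^k * poly (a k) (of_real x) * nik_density mu ep j k x) =
      (\<Sum>k=j+1..m. (-1)^k * poly (a k) (of_real x) * hat_s mu ep (j + 1) k (of_real x))"
    by (intro sum.cong) (auto simp: nik_density_def)
  finally show ?thesis
    using assms(1) by (simp add: Acal_def)
qed

lemma map_poly_of_real_mult:
  "map_poly (of_real :: real \<Rightarrow> 'a::real_field) (p * q) = map_poly of_real p * map_poly of_real q"
  by (rule poly_eqI) (simp add: coeff_map_poly coeff_mult)

lemma TT_nonzero: "(\<And>k. k \<in> {1..m} \<Longrightarrow> t k \<noteq> 0) \<Longrightarrow> TT t m \<noteq> 0"
  unfolding TT_def by (subst Lcm_0_iff) auto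

lemma dvd_TT: "k \<in> {1..m} \<Longrightarrow> t k dvd TT t m"
  unfolding TT_def by (rule dvd_Lcm) simp

lemma TA0_eq_TT_times_Acal:
  assumes T: "poly (map_poly of_real (TT t m)) z \<noteq> 0"
  shows "TA0 mu ep v t m a z = poly (map_poly of_real (TT t m)) z * Acal mu ep v t m a 0 z"
proof -
  let ?T = "map_poly of_real (TT t m) :: complex poly"
  have ratf: "poly ?T z * ratf v t k z = poly (map_poly of_real ((TT t m div t k) * v k)) z"
    if k: "k \<in> {1..m}" for k
  proof -
    have "?T = map_poly of_real (TT t m div t k) * map_poly of_real (t k)"
      using dvd_TT[OF k] by (simp flip: map_poly_of_real_mult)
    then show ?thesis
      using T by (simp add: ratf_def map_poly_of_real_mult)
  qed
  have "poly ?T z * Acal mu ep v t m a 0 z =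
      poly ?T z * (poly (a 0) z + (\<Sum>k=1..m. (-1)^k * poly (a k) z * hat_s mu ep 1 k z))
      + (\<Sum>k=1..m. (-1)^k * poly (a k) z * (poly ?T z * ratf v t k z))"
    by (simp add: Acal_def distrib_left sum_distrib_left sum.distrib algebra_simps)
  also have "(\<Sum>k=1..m. (-1)^k * poly (a k) z * (poly ?T z * ratf v t k z)) =
      (\<Sum>k=1..m. (-1)^k * poly (a k) z * poly (map_poly of_real ((TT t m div t k) * v k)) z)"
    by (intro sum.cong refl) (simp add: ratf)
  finally show ?thesis
    unfolding TA0_def by simp
qed

lemma TA0_bigo:
  assumes A0: "Acal mu ep v t m a 0 \<in> O[at_infinity](\<lambda>z. 1 / z ^ (n + 1))"
    and D: "degree (TT t m) \<le> n" and T: "TT t m \<noteq> 0"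
  shows "TA0 mu ep v t m a \<in> O[at_infinity](\<lambda>z. 1 / z ^ Suc (n - degree (TT t m)))"
proof -
  define T where "T = (map_poly of_real (TT t m) :: complex poly)"
  have T0: "T \<noteq> 0"
    using T by (simp add: T_def map_poly_eq_0_iff)
  have dT: "degree T = degree (TT t m)"
    unfolding T_def by (rule degree_map_poly) simp
  have ev_eq: "eventually (\<lambda>z. TA0 mu ep v t m a z = poly T z * Acal mu ep v t m a 0 z) at_infinity"
    using eventually_poly_nonzero_at_infinity[OF T0]
    by eventually_elim (simp add: T_def TA0_eq_TT_times_Acal)
  have ev_pow: "eventually (\<lambda>z::complex.
      z ^ degree T * (1 / z ^ (n + 1)) = 1 / z ^ Suc (n - degree T)) at_infinity"
  proof (rule eventually_mono[OF eventually_not_equal_at_infinity[of 0]])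
    fix z :: complex assume "z \<noteq> 0"
    have "z ^ (n + 1) = z ^ degree T * z ^ Suc (n - degree T)"
      using D by (simp add: dT flip: power_add)
    then show "z ^ degree T * (1 / z ^ (n + 1)) = 1 / z ^ Suc (n - degree T)"
      using \<open>z \<noteq> 0\<close> by simp
  qed
  have "(\<lambda>z. poly T z * Acal mu ep v t m a 0 z) \<in> O[at_infinity](\<lambda>z. z ^ degree T * (1 / z ^ (n + 1)))"
    by (intro landau_o.big.mult poly_bigo_power A0)
  also have "O[at_infinity](\<lambda>z. z ^ degree T * (1 / z ^ (n + 1))) =
      O[at_infinity](\<lambda>z::complex. 1 / z ^ Suc (n - degree T))"
    by (rule landau_o.big.cong[OF ev_pow])
  finally show ?thesis
    using landau_o.big.in_cong[OF ev_eq] by (simp only: dT)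
qed

lemma poly_Qpoly_eq_0_iff:
  assumes "finite {x. x \<in> {al j..be j} \<and> A j (of_real x) = 0}"
  shows "poly (Qpoly A al be j) z = 0 \<longleftrightarrow> z \<in> of_real ` {x. x \<in> {al j..be j} \<and> A j (of_real x) = 0}"
  using assms by (auto simp: Qpoly_def poly_prod)

lemma degree_Qpoly:
  assumes "finite {x. x \<in> {al j..be j} \<and> A j (of_real x) = 0}"
  shows "degree (Qpoly A al be j) = card {x. x \<in> {al j..be j} \<and> A j (of_real x) = 0}"
  unfolding Qpoly_def using assms by (subst degree_prod_eq_sum_degree) auto

lemma Qpoly_nonzero: "Qpoly A al be j \<noteq> 0"
  unfolding Qpoly_def by (cases "finite {x. x \<in> {al j..be j} \<and> A j (of_real x) = 0}") auto

locale nikishin_system =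
  fixes m :: nat and mu :: "nat \<Rightarrow> real measure" and ep al be :: "nat \<Rightarrow> real"
  assumes m_pos: "1 \<le> m"
    and sets_mu: "\<And>j. j \<in> {1..m} \<Longrightarrow> sets (mu j) = sets borel"
    and finite_mu: "\<And>j. j \<in> {1..m} \<Longrightarrow> finite_measure (mu j)"
    and hull_msupp_mu: "\<And>j. j \<in> {1..m} \<Longrightarrow> convex hull (msupp (mu j)) = {al j..be j}"
    and ep: "\<And>j. j \<in> {1..m} \<Longrightarrow> ep j = 1 \<or> ep j = -1"
    and disjoint: "\<And>j. j \<in> {1..m-1} \<Longrightarrow> {al j..be j} \<inter> {al (j+1)..be (j+1)} = {}"
begin

abbreviation \<Delta> :: "nat \<Rightarrow> real set" where "\<Delta> j \<equiv> {al j..be j}"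

lemma interval_measure_mu: "j \<in> {1..m} \<Longrightarrow> interval_measure (mu j) (al j) (be j)"
  using AE_in_convex_hull_msupp[OF sets_mu] hull_msupp_mu sets_mu finite_mu
  by (simp add: interval_measure_def interval_measure_axioms_def)

lemma ep_squared: "j \<in> {1..m} \<Longrightarrow> of_real (ep j) * of_real (ep j) = (1 :: complex)"
  using ep[of j] by auto

lemma ep_nonzero: "j \<in> {1..m} \<Longrightarrow> of_real (ep j) \<noteq> (0 :: complex)"
  using ep[of j] by auto

lemma bounded_borel_on_nik_up:
  assumes "1 \<le> j" "j + d \<le> m" "compact S" "S \<inter> \<Delta> j = {}"
  shows "bounded_borel_on S (\<lambda>x. nik_up mu ep j d (of_real x))"
  using assms
proof (induction d arbitrary: j S)
  case 0
  then interpret interval_measure "mu j" "al j" "be j"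
    by (intro interval_measure_mu) simp
  have "bounded_borel_on S (\<lambda>x. of_real (ep j) * cauchy_transform (mu j) (\<lambda>_. 1) (of_real x))"
    using 0 by (intro bounded_borel_on_mult bounded_borel_on_const bounded_borel_on_cauchy_transform) simp_all
  then show ?case
    by (simp add: cauchy_transform_def)
next
  case (Suc d)
  then interpret interval_measure "mu j" "al j" "be j"
    by (intro interval_measure_mu) simp
  have "bounded_borel_on (\<Delta> j) (\<lambda>x. nik_up mu ep (Suc j) d (of_real x))"
    using Suc.prems disjoint[of j] by (intro Suc.IH) auto
  then have "bounded_borel_on S (\<lambda>x. of_real (ep j) *
      cauchy_transform (mu j) (\<lambda>y. nik_up mu ep (Suc j) d (of_real y)) (of_real x))"
    using Suc.prems by (intro bounded_borel_on_mult bounded_borel_on_const bounded_borel_on_cauchy_transform)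
  then show ?case
    by (simp add: cauchy_transform_def)
qed

lemma bounded_borel_on_nik_density:
  assumes "1 \<le> i" "i \<le> k" "k \<le> m"
  shows "bounded_borel_on (\<Delta> i) (nik_density mu ep i k)"
proof (cases "k = i")
  case True
  then have "nik_density mu ep i k = (\<lambda>_. 1)"
    by (simp add: fun_eq_iff nik_density_def)
  then show ?thesis
    by (simp add: bounded_borel_on_const)
next
  case False
  then have "bounded_borel_on (\<Delta> i) (\<lambda>x. nik_up mu ep (i + 1) (k - (i + 1)) (of_real x))"
    using assms disjoint[of i] by (intro bounded_borel_on_nik_up) auto
  moreover have "nik_density mu ep i k = (\<lambda>x. nik_up mu ep (i + 1) (k - (i + 1)) (of_real x))"
    using False assms by (simp add: fun_eq_iff nik_density_def hat_s_def)
  ultimately show ?thesis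
    by simp
qed

lemma bounded_borel_on_Acal:
  assumes "1 \<le> j" "j \<le> m"
  shows "bounded_borel_on (\<Delta> j) (\<lambda>x. Acal mu ep v t m a j (of_real x))"
  unfolding Acal_of_real_eq_sum_nik_density[OF assms] using assms
  by (intro bounded_borel_on_sum bounded_borel_on_mult bounded_borel_on_const bounded_borel_on_poly
      bounded_borel_on_nik_density) auto

end

locale hermite_pade_forms = nikishin_system m mu ep al be
  for m :: nat and mu :: "nat \<Rightarrow> real measure" and ep al be :: "nat \<Rightarrow> real" +
  fixes v t :: "nat \<Rightarrow> real poly" and a :: "nat \<Rightarrow> complex poly" and n :: nat
  assumes Acal_0_bigo: "Acal mu ep v t m a 0 \<in> O[at_infinity](\<lambda>z. 1 / z ^ (n + 1))"
    and Acal_bigo: "\<And>j. j \<in> {1..m-1} \<Longrightarrow> Acal mu ep v t m a j \<in> O[at_infinity](\<lambda>z. 1 / z)"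
    and t_nonzero: "\<And>k. k \<in> {1..m} \<Longrightarrow> t k \<noteq> 0"
    and degree_TT_less: "degree (TT t m) < n"
    and zeros_Acal: "\<And>j. j \<in> {1..m-1} \<Longrightarrow>
      {z. z \<notin> of_real ` {al (j+1)..be (j+1)} \<and> Acal mu ep v t m a j z = 0} \<subseteq> of_real ` {al j..be j}"
    and card_zeros_Acal: "\<And>j. j \<in> {1..m-1} \<Longrightarrow>
      card {z. z \<notin> of_real ` {al (j+1)..be (j+1)} \<and> Acal mu ep v t m a j z = 0} = n - degree (TT t m)"
begin

abbreviation A :: "nat \<Rightarrow> complex \<Rightarrow> complex" where "A \<equiv> Acal mu ep v t m a"
abbreviation D :: nat where "D \<equiv> degree (TT t m)"
abbreviation T :: "complex poly" where "T \<equiv> map_poly of_real (TT t m)"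
abbreviation Q :: "nat \<Rightarrow> complex poly" where "Q j \<equiv> Qpoly A al be j"
abbreviation Z :: "nat \<Rightarrow> complex set"
  where "Z j \<equiv> {z. z \<notin> of_real ` \<Delta> (j+1) \<and> A j z = 0}"

lemma finite_Z:
  assumes "j \<in> {1..m-1}"
  shows "finite (Z j)"
proof (rule ccontr)
  assume "infinite (Z j)"
  then show False
    using card_zeros_Acal[OF assms] degree_TT_less by simp
qed

lemma Acal_eq_cauchy_transform:
  assumes j: "j \<in> {1..m-1}" and z: "z \<notin> of_real ` \<Delta> (j+1)"
  shows "A j z = of_real (ep (j+1)) * cauchy_transform (mu (j+1)) (\<lambda>x. A (j+1) (of_real x)) z"
proof -
  interpret \<mu>: interval_measure "mu (j+1)" "al (j+1)" "be (j+1)"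
    using j by (intro interval_measure_mu) auto
  define e where "e = (of_real (ep (j+1)) :: complex)"
  have "A j z = cauchy_transform (mu (j+1))
      (\<lambda>x. \<Sum>k\<in>{j+1..m}. poly (smult ((-1)^k * e) (a k)) (of_real x) * nik_density mu ep (j+1) k x) z"
  proof (rule \<mu>.cauchy_transform_representation[where P = "smult ((-1)^j) (a j)", OF _ _ Acal_bigo[OF j] z])
    show "bounded_borel_on (\<Delta> (j+1)) (nik_density mu ep (j+1) k)" if "k \<in> {j+1..m}" for k
      using that j by (intro bounded_borel_on_nik_density) auto
    show "A j z' = poly (smult ((-1)^j) (a j)) z' + (\<Sum>k\<in>{j+1..m}.
        poly (smult ((-1)^k * e) (a k)) z' * cauchy_transform (mu (j+1)) (nik_density mu ep (j+1) k) z')" for z'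
      using j by (simp add: Acal_def hat_s_eq_cauchy_transform e_def mult_ac)
  qed
  also have "(\<lambda>x. \<Sum>k\<in>{j+1..m}. poly (smult ((-1)^k * e) (a k)) (of_real x) * nik_density mu ep (j+1) k x)
      = (\<lambda>x. e * A (j+1) (of_real x))"
  proof
    fix x
    have "A (j+1) (of_real x) = (\<Sum>k=j+1..m. (-1)^k * poly (a k) (of_real x) * nik_density mu ep (j+1) k x)"
      using j by (intro Acal_of_real_eq_sum_nik_density) auto
    then show "(\<Sum>k\<in>{j+1..m}. poly (smult ((-1)^k * e) (a k)) (of_real x) * nik_density mu ep (j+1) k x)
        = e * A (j+1) (of_real x)"
      by (simp add: sum_distrib_left mult_ac)
  qed
  finally show ?thesis
    by (simp add: e_def cauchy_transform_cmult)
qed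

lemma TA0_bigo_inverse_power: "TA0 mu ep v t m a \<in> O[at_infinity](\<lambda>z. 1 / z ^ Suc (n - D))"
  using degree_TT_less t_nonzero by (intro TA0_bigo[OF Acal_0_bigo] TT_nonzero) auto

lemma TA0_eq_cauchy_transform:
  assumes z: "z \<notin> of_real ` \<Delta> 1"
  shows "TA0 mu ep v t m a z =
    of_real (ep 1) * cauchy_transform (mu 1) (\<lambda>x. A 1 (of_real x) * poly T (of_real x)) z"
proof -
  interpret \<mu>: interval_measure "mu 1" "al 1" "be 1"
    using m_pos by (intro interval_measure_mu) auto
  define e where "e = (of_real (ep 1) :: complex)"
  define G where "G = (\<Sum>k=1..m. smult ((-1)^k) (a k * map_poly of_real ((TT t m div t k) * v k)))"
  have TA0_bigo: "TA0 mu ep v t m a \<in> O[at_infinity](\<lambda>z. 1 / z)"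
    using landau_o.big_trans[OF TA0_bigo_inverse_power inverse_power_bigo_inverse_power[of 1]] by simp
  have "TA0 mu ep v t m a z = cauchy_transform (mu 1)
      (\<lambda>x. \<Sum>k\<in>{1..m}. poly (smult ((-1)^k * e) (T * a k)) (of_real x) * nik_density mu ep 1 k x) z"
  proof (rule \<mu>.cauchy_transform_representation[where P = "T * a 0 + G", OF _ _ TA0_bigo z])
    show "bounded_borel_on (\<Delta> 1) (nik_density mu ep 1 k)" if "k \<in> {1..m}" for k
      using that by (intro bounded_borel_on_nik_density) auto
    fix z'
    have "TA0 mu ep v t m a z' = poly (T * a 0 + G) z' +
        (\<Sum>k=1..m. poly T z' * ((-1)^k * poly (a k) z' * hat_s mu ep 1 k z'))"
      by (simp add: TA0_def G_def poly_sum distrib_left sum_distrib_left mult_ac)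
    also have "\<dots> = poly (T * a 0 + G) z' + (\<Sum>k\<in>{1..m}.
        poly (smult ((-1)^k * e) (T * a k)) z' * cauchy_transform (mu 1) (nik_density mu ep 1 k) z')"
      by (intro arg_cong2[where f = "(+)"] sum.cong refl) (simp add: hat_s_eq_cauchy_transform e_def mult_ac)
    finally show "TA0 mu ep v t m a z' = poly (T * a 0 + G) z' + (\<Sum>k\<in>{1..m}.
        poly (smult ((-1)^k * e) (T * a k)) z' * cauchy_transform (mu 1) (nik_density mu ep 1 k) z')" .
  qed
  also have "(\<lambda>x. \<Sum>k\<in>{1..m}. poly (smult ((-1)^k * e) (T * a k)) (of_real x) * nik_density mu ep 1 k x)
      = (\<lambda>x. e * (A 1 (of_real x) * poly T (of_real x)))"
    using m_pos
    by (simp add: fun_eq_iff Acal_of_real_eq_sum_nik_density sum_distrib_left sum_distrib_right mult_ac)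
  finally show ?thesis
    by (simp add: e_def cauchy_transform_cmult)
qed

lemma TA0_orthogonality:
  assumes "\<nu> < n - D"
  shows "of_real (ep 1) * (LINT x|mu 1. of_real x ^ \<nu> * A 1 (of_real x) * poly T (of_real x)) = 0"
proof -
  interpret \<mu>: interval_measure "mu 1" "al 1" "be 1"
    using m_pos by (intro interval_measure_mu) auto
  define w where "w = (\<lambda>x. A 1 (of_real x) * poly T (of_real x))"
  have w: "bounded_borel_on (\<Delta> 1) w"
    unfolding w_def using m_pos by (intro bounded_borel_on_mult bounded_borel_on_Acal bounded_borel_on_poly) auto
  have "eventually (\<lambda>z. cauchy_transform (mu 1) w z = of_real (ep 1) * TA0 mu ep v t m a z) at_infinity"
    using \<mu>.eventually_not_in_interval_at_infinity
  proof eventually_elim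
    case (elim z)
    show ?case
      using TA0_eq_cauchy_transform[OF elim] ep_squared[of 1] m_pos
      by (simp add: w_def flip: mult.assoc)
  qed
  then have "cauchy_transform (mu 1) w \<in> O[at_infinity](\<lambda>z. 1 / z ^ Suc (n - D))"
    using TA0_bigo_inverse_power by (simp add: landau_o.big.in_cong)
  then have "(LINT x|mu 1. of_real x ^ \<nu> * w x) = 0"
    using assms by (rule \<mu>.moments_eq_0_if_cauchy_transform_bigo[OF w])
  then show ?thesis
    by (simp add: w_def mult.assoc)
qed

lemma Z_eq_of_real_roots:
  assumes j: "j \<in> {1..m-1}"
  shows "Z j = of_real ` {x. x \<in> \<Delta> j \<and> A j (of_real x) = 0}"
proof
  show "Z j \<subseteq> of_real ` {x. x \<in> \<Delta> j \<and> A j (of_real x) = 0}"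
    using zeros_Acal[OF j] by blast
  show "of_real ` {x. x \<in> \<Delta> j \<and> A j (of_real x) = 0} \<subseteq> Z j"
    using disjoint[OF j] by auto
qed

lemma Qpoly_roots:
  assumes j: "j \<in> {1..m-1}"
  shows "degree (Q j) = card (Z j)"
    and "\<And>\<zeta>. poly (Q j) \<zeta> = 0 \<longleftrightarrow> \<zeta> \<in> Z j"
    and "\<And>x. x \<in> \<Delta> (j+1) \<Longrightarrow> poly (Q j) (of_real x) \<noteq> 0"
proof -
  define S where "S = {x. x \<in> \<Delta> j \<and> A j (of_real x) = 0}"
  have inj: "inj_on (of_real :: real \<Rightarrow> complex) S"
    by (simp add: inj_on_def)
  have "finite S"
    using finite_Z[OF j] unfolding Z_eq_of_real_roots[OF j] S_def[symmetric] by (rule finite_imageD[OF _ inj])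
  then show "degree (Q j) = card (Z j)"
    unfolding Z_eq_of_real_roots[OF j] S_def[symmetric] card_image[OF inj] unfolding S_def
    by (rule degree_Qpoly)
  show zero_iff: "poly (Q j) \<zeta> = 0 \<longleftrightarrow> \<zeta> \<in> Z j" for \<zeta>
    unfolding Z_eq_of_real_roots[OF j] using \<open>finite S\<close> unfolding S_def by (rule poly_Qpoly_eq_0_iff)
  show "poly (Q j) (of_real x) \<noteq> 0" if "x \<in> \<Delta> (j+1)" for x
    using that by (simp add: zero_iff)
qed

lemma bounded_borel_on_Acal_div_Qpoly:
  assumes j: "j \<in> {1..m-1}"
  shows "bounded_borel_on (\<Delta> (j+1)) (\<lambda>x. A (j+1) (of_real x) / poly (Q j) (of_real x))"
proof -
  have "bounded_borel_on (\<Delta> (j+1)) (\<lambda>x. A (j+1) (of_real x) * (1 / poly (Q j) (of_real x)))"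
    using j Qpoly_roots(3)[OF j]
    by (intro bounded_borel_on_mult bounded_borel_on_Acal bounded_borel_on_inverse_poly) auto
  then show ?thesis
    by simp
qed

lemma Acal_eq_Qpoly_times_cauchy_transform:
  assumes j: "j \<in> {1..m-1}" and z: "z \<notin> of_real ` \<Delta> (j+1)"
  shows "A j z = poly (Q j) z *
    (of_real (ep (j+1)) * cauchy_transform (mu (j+1)) (\<lambda>x. A (j+1) (of_real x) / poly (Q j) (of_real x)) z)"
proof -
  interpret \<mu>: interval_measure "mu (j+1)" "al (j+1)" "be (j+1)"
    using j by (intro interval_measure_mu) auto
  have j1: "j + 1 \<in> {1..m}"
    using j by auto
  define w where "w = (\<lambda>x. A (j+1) (of_real x) / poly (Q j) (of_real x))"
  have w: "bounded_borel_on (\<Delta> (j+1)) w"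
    unfolding w_def by (rule bounded_borel_on_Acal_div_Qpoly[OF j])
  have Qw: "bounded_borel_on (\<Delta> (j+1)) (\<lambda>x. poly (Q j) (of_real x) * w x)"
    by (intro bounded_borel_on_mult bounded_borel_on_poly w) simp
  have A_eq: "A j z' =
      of_real (ep (j+1)) * cauchy_transform (mu (j+1)) (\<lambda>x. poly (Q j) (of_real x) * w x) z'"
    if z': "z' \<notin> of_real ` \<Delta> (j+1)" for z'
  proof -
    have "cauchy_transform (mu (j+1)) (\<lambda>x. A (j+1) (of_real x)) z' =
        cauchy_transform (mu (j+1)) (\<lambda>x. poly (Q j) (of_real x) * w x) z'"
      using j Qw z' Qpoly_roots(3)[OF j]
      by (intro \<mu>.cauchy_transform_cong bounded_borel_on_Acal) (auto simp: w_def)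
    then show ?thesis
      using Acal_eq_cauchy_transform[OF j z'] by simp
  qed
  have "cauchy_transform (mu (j+1)) (\<lambda>x. poly (Q j) (of_real x) * w x) z =
      poly (Q j) z * cauchy_transform (mu (j+1)) w z"
  proof (rule \<mu>.cauchy_transform_poly_times_eq[OF w finite_Z[OF j] _ _ _ _ z])
    show "degree (Q j) \<le> card (Z j)" "Z j \<inter> of_real ` \<Delta> (j+1) = {}"
      using Qpoly_roots(1)[OF j] by auto
    show "poly (Q j) \<zeta> = 0" if "\<zeta> \<in> Z j" for \<zeta>
      using that Qpoly_roots(2)[OF j] by simp
    show "cauchy_transform (mu (j+1)) (\<lambda>x. poly (Q j) (of_real x) * w x) \<zeta> = 0"
      if "\<zeta> \<in> Z j" for \<zeta>
      using that A_eq[of \<zeta>] ep_nonzero[OF j1] by auto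
  qed
  then show ?thesis
    using A_eq[OF z] by (simp add: w_def)
qed

lemma Acal_eq_Qpoly_times_integral:
  assumes "j \<in> {1..m-1}" "z \<notin> of_real ` \<Delta> (j+1)"
  shows "A j z = poly (Q j) z * (of_real (ep (j+1)) *
    (LINT x|mu (j+1). A (j+1) (of_real x) / (z - of_real x) / poly (Q j) (of_real x)))"
proof -
  have "(\<lambda>x. A (j+1) (of_real x) / poly (Q j) (of_real x) / (z - of_real x)) =
      (\<lambda>x. A (j+1) (of_real x) / (z - of_real x) / poly (Q j) (of_real x))"
    by (simp add: fun_eq_iff divide_divide_eq_left mult.commute)
  then show ?thesis
    using Acal_eq_Qpoly_times_cauchy_transform[OF assms] by (simp add: cauchy_transform_def)
qed

lemma Acal_div_Qpoly_orthogonality: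
  assumes j: "j \<in> {1..m-1}" and "\<nu> < n - D"
  shows "of_real (ep (j+1)) *
    (LINT x|mu (j+1). of_real x ^ \<nu> * A (j+1) (of_real x) / poly (Q j) (of_real x)) = 0"
proof -
  interpret \<mu>: interval_measure "mu (j+1)" "al (j+1)" "be (j+1)"
    using j by (intro interval_measure_mu) auto
  define e where "e = (of_real (ep (j+1)) :: complex)"
  define w where "w = (\<lambda>x. A (j+1) (of_real x) / poly (Q j) (of_real x))"
  have "j + 1 \<in> {1..m}"
    using j by auto
  then have "e \<noteq> 0"
    unfolding e_def by (rule ep_nonzero)
  have "eventually (\<lambda>z. cauchy_transform (mu (j+1)) w z = inverse e * (A j z * (1 / poly (Q j) z)))
      at_infinity"
    using \<mu>.eventually_not_in_interval_at_infinity
      eventually_poly_nonzero_at_infinity[OF Qpoly_nonzero[of A al be j]]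
  proof eventually_elim
    case (elim z)
    then show ?case
      using Acal_eq_Qpoly_times_cauchy_transform[OF j elim(1)] \<open>e \<noteq> 0\<close> by (simp add: e_def w_def)
  qed
  moreover have "degree (Q j) = n - D"
    using Qpoly_roots(1)[OF j] card_zeros_Acal[OF j] by simp
  then have "(\<lambda>z. A j z * (1 / poly (Q j) z)) \<in> O[at_infinity](\<lambda>z. 1 / z * (1 / z ^ (n - D)))"
    using landau_o.big.mult[OF Acal_bigo[OF j] inverse_poly_bigo_inverse_power[OF Qpoly_nonzero[of A al be j]]]
    by simp
  then have "(\<lambda>z. inverse e * (A j z * (1 / poly (Q j) z))) \<in> O[at_infinity](\<lambda>z. 1 / z ^ Suc (n - D))"
    by (subst cmult_in_bigo_iff) simp
  ultimately have "cauchy_transform (mu (j+1)) w \<in> O[at_infinity](\<lambda>z. 1 / z ^ Suc (n - D))"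
    by (simp add: landau_o.big.in_cong)
  then have "(LINT x|mu (j+1). of_real x ^ \<nu> * w x) = 0"
    using assms(2) bounded_borel_on_Acal_div_Qpoly[OF j, folded w_def]
    by (intro \<mu>.moments_eq_0_if_cauchy_transform_bigo)
  then show ?thesis
    by (simp add: w_def)
qed

end

theorem lemma2p1:
  fixes m n N :: nat
    and mu :: "nat \<Rightarrow> real measure" and ep :: "nat \<Rightarrow> real"
    and al be :: "nat \<Rightarrow> real"
    and v t :: "nat \<Rightarrow> real poly"
    and a :: "nat \<Rightarrow> complex poly"
  assumes m: "m \<ge> 1"
    (* Delta_j = {al j..be j}, consecutive ones disjoint *)
    and intv: "\<forall>j\<in>{1..m}. al j \<le> be j"
    and disj: "\<forall>j\<in>{1..m-1}. {al j..be j} \<inter> {al (j+1)..be (j+1)} = {}"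
    (* sigma_j = ep j * mu j: finite Borel measure of constant sign, infinite support, hull Delta_j *)
    and meas: "\<forall>j\<in>{1..m}. sets (mu j) = sets borel \<and> finite_measure (mu j)"
    and sgn: "\<forall>j\<in>{1..m}. ep j = 1 \<or> ep j = -1"
    and supp: "\<forall>j\<in>{1..m}. infinite (msupp (mu j)) \<and> convex hull (msupp (mu j)) = {al j..be j}"
    (* r_k = v_k / t_k *)
    and rat: "\<forall>k\<in>{1..m}. lead_coeff (t k) = 1 \<and> degree (v k) < degree (t k) \<and> coprime (v k) (t k)"
    (* zeros of T avoid Delta_1 and Delta_m *)
    and Tzeros: "\<forall>z::complex. poly (map_poly of_real (TT t m)) z = 0 \<longrightarrow>
                   z \<notin> of_real ` ({al 1..be 1} \<union> {al m..be m})"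
    (* f has exactly D poles (with multiplicity) in C \ Delta_m *)
    and fpoles: "finite {z. z \<notin> of_real ` {al m..be m} \<and> is_pole (fF mu ep v t m) z} \<and>
                 (\<Sum>z\<in>{z. z \<notin> of_real ` {al m..be m} \<and> is_pole (fF mu ep v t m) z}.
                     nat (- zorder (fF mu ep v t m) z)) = degree (TT t m)"
    and nN: "n > N" and ND: "N \<ge> degree (TT t m)"
    (* the known facts valid for n > N *)
    and HP: "is_HP mu ep v t m n a"
    and monic: "degree (a m) = n \<and> lead_coeff (a m) = 1"
    and uniq: "\<forall>b. is_HP mu ep v t m n b \<longrightarrow> (\<exists>c. \<forall>j\<le>m. b j = smult c (a j))"
    and zeros_m: "card {x\<in>{al m..be m}. poly (a m) (of_real x) = 0} = n - degree (TT t m) \<and>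
                  (\<forall>x\<in>{al m..be m}. poly (a m) (of_real x) = 0 \<longrightarrow> order (of_real x) (a m) = 1)"
    and zeros_j: "\<forall>j\<in>{1..m-1}.
         (let Z = {z. z \<notin> of_real ` {al (j+1)..be (j+1)} \<and> Acal mu ep v t m a j z = 0} in
            Z \<subseteq> of_real ` {al j..be j} \<and> card Z = n - degree (TT t m) \<and>
            (\<forall>z\<in>Z. deriv (Acal mu ep v t m a j) z \<noteq> 0))"
  shows
    "(\<forall>j\<in>{1..m-1}. \<forall>z. z \<notin> of_real ` {al (j+1)..be (j+1)} \<longrightarrow>
        Acal mu ep v t m a j z =
          poly (Qpoly (Acal mu ep v t m a) al be j) z *
          (of_real (ep (j+1)) * (LINT x|mu (j+1).
              Acal mu ep v t m a (j+1) (of_real x) / (z - of_real x)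
              / poly (Qpoly (Acal mu ep v t m a) al be j) (of_real x)))) \<and>
     (\<forall>z. z \<notin> of_real ` {al 1..be 1} \<longrightarrow>
        TA0 mu ep v t m a z =
          of_real (ep 1) * (LINT x|mu 1.
              Acal mu ep v t m a 1 (of_real x) * poly (map_poly of_real (TT t m)) (of_real x)
              / (z - of_real x))) \<and>
     (\<forall>j\<in>{1..m-1}. \<forall>\<nu><n - degree (TT t m).
        of_real (ep (j+1)) * (LINT x|mu (j+1).
           of_real x ^ \<nu> * Acal mu ep v t m a (j+1) (of_real x)
           / poly (Qpoly (Acal mu ep v t m a) al be j) (of_real x)) = 0) \<and>
     (\<forall>\<nu><n - degree (TT t m).
        of_real (ep 1) * (LINT x|mu 1.
           of_real x ^ \<nu> * Acal mu ep v t m a 1 (of_real x)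
           * poly (map_poly of_real (TT t m)) (of_real x)) = 0)"
proof -
  have nikishin: "nikishin_system m mu ep al be"
    by (rule nikishin_system.intro) (use m disj meas sgn supp in blast)+
  interpret hermite_pade_forms m mu ep al be v t a n
  proof (rule hermite_pade_forms.intro[OF nikishin], rule hermite_pade_forms_axioms.intro)
    show "Acal mu ep v t m a 0 \<in> O[at_infinity](\<lambda>z. 1 / z ^ (n + 1))"
      "\<And>j. j \<in> {1..m-1} \<Longrightarrow> Acal mu ep v t m a j \<in> O[at_infinity](\<lambda>z. 1 / z)"
      using HP by (auto simp: is_HP_def)
    show "\<And>k. k \<in> {1..m} \<Longrightarrow> t k \<noteq> 0"
      using rat by fastforce
    show "degree (TT t m) < n"
      using nN ND by simp
    show "{z. z \<notin> of_real ` {al (j+1)..be (j+1)} \<and> Acal mu ep v t m a j z = 0} \<subseteq> of_real ` {al j..be j}"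
      if "j \<in> {1..m-1}" for j
      using bspec[OF zeros_j that] unfolding Let_def by (elim conjE)
    show "card {z. z \<notin> of_real ` {al (j+1)..be (j+1)} \<and> Acal mu ep v t m a j z = 0} = n - degree (TT t m)"
      if "j \<in> {1..m-1}" for j
      using bspec[OF zeros_j that] unfolding Let_def by (elim conjE)
  qed
  show ?thesis
    using Acal_eq_Qpoly_times_integral TA0_eq_cauchy_transform[unfolded cauchy_transform_def]
      Acal_div_Qpoly_orthogonality TA0_orthogonality
    by blast
qed

end
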